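(* Suppose that $\gamma\in\mathscr{M}(Q)$ is simultaneously $(\varphi,\varepsilon)$-quasicritical of type $\sigma$ and $(\varphi,\varepsilon')$-quasicritical of type $\sigma'$, for some $\varphi\in\mathbb{R}$, $\varepsilon,\varepsilon'\in(0,\pi/4)$ and sign strings $\sigma,\sigma'$. Then $\sigma'\neq-\sigma$.
   Context: $[n]=\{1,\dots,n\}$; signs $\pm$ are identified with $\pm1$. A sign string is $\sigma:[l]\to\{\pm1\}$, $l\ge2$, with alternating consecutive values; $|\sigma|=l$; $-\sigma$ is defined by $(-\sigma)(k)=-\sigma(k)$. Fix $Q=(q,z)\in\mathbb{C}\times\mathbb{S}^1$, $z\ne-1$, $\theta_1\in(-\pi,\pi)$ with $e^{i\theta_1}=z$, and $r\ge2$. $\mathscr{M}(Q)$ is the space of regular $C^r$ curves $\gamma:[0,1]\to\mathbb{C}$ with $\gamma(0)=0$, unit tangent $\mathbf{t}_\gamma(0)=1$, $\gamma(1)=q$, $\mathbf{t}_\gamma(1)=z$, curvature $\kappa_\gamma\in(-1,1)$ everywhere, and $\theta_\gamma(1)=\theta_1$, where $\theta_\gamma$ is the continuous argument of $\mathbf{t}_\gamma$ with $\theta_\gamma(0)=0$. For $\varphi\in\mathbb{R}$ write $\varphi_\pm=\varphi\pm\pi/2$. Stretchability: for $\kappa_0\in(0,1)$ and $r_0,r_b\in\mathbb{R}$, $b>0$, let $F(u)=u/\sqrt{1-u^2}$ ($|u|<1$), $F=+\infty$ for $u\ge1$, $-\infty$ for $u\le-1$; $g_\pm(x)=F(\pm\kappa_0x+r_0/\sqrt{1+r_0^2})$,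 $h_\pm(x)=F(\mp\kappa_0(x-b)+r_b/\sqrt{1+r_b^2})$; $\lambda_+$ (resp. $\lambda_-$) is the common real value of $g_+,h_+$ (resp. $g_-,h_-$) where their graphs meet, or $+\infty$ (resp. $-\infty$) if they do not. If $I\subset[0,1]$ is a closed interval and $\langle\mathbf{t}_\gamma(t),e^{i\psi}\rangle>0$ on $I$, then after translating and rotating by $-\psi$, $\gamma|_I$ is the graph $x\mapsto(x,y(x))$, $x\in[0,b]$; put $f=y'$, $r_0=f(0)$, $r_b=f(b)$. $\gamma|_I$ is $\kappa_0$-stretchable with respect to $e^{i\psi}$ if $|\kappa_\gamma|\le\kappa_0$ on $I$ and $0\in[\lambda_-,\lambda_+]$; it is stretchable with respect to $e^{i\psi}$ (or w.r.t. $\psi$) if it is $\kappa_0$-stretchable for some $\kappa_0\in(0,1)$. Quasicritical: for a sign string $\sigma$, $n=|\sigma|$, $\varphi\in\mathbb{R}$, $\varepsilon\in(0,\pi/4)$, $\gamma$ is $(\varphi,\varepsilon)$-quasicritical of type $\sigma$ if there are closed intervals $J_1<\dots<J_n$ in $[0,1]$ such that for each $k\in[n]$: (i) $\theta_\gamma(J_k)\subset(\varphi_-+2\varepsilon,\varphi_++\varepsilon)$ if $\sigma(k)=+$ and $\theta_\gamma(J_k)\subset(\varphi_--\varepsilon,\varphi_+-2\varepsilon)$ if $\sigma(k)=-$; (ii) $|\theta_\gamma(t)-\varphi|<\pi/2-2\varepsilon$ for all $t\notin\operatorname{Int}(\bigcup_kJ_k)$; (iii) $J_k$ contains a closed subinterval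 $I_k$ with $|\theta_\gamma(t)-\varphi_{\sigma(k)}|<\varepsilon$ for all $t\in I_k$ and $\gamma|_{I_k}$ stretchable with respect to $\varphi_{\sigma(k)}$. *)

theory Defs
  imports "HOL-Analysis.Analysis" "HOL-Library.Extended_Real"
begin

(* Curves are maps gamma :: real => complex, only their restriction to [0,1] matters.
   Derivatives are one-sided at the endpoints (taken within [0,1]). *)

definition dgam :: "(real \<Rightarrow> complex) \<Rightarrow> real \<Rightarrow> complex" where
  "dgam \<gamma> t = vector_derivative \<gamma> (at t within {0..1})"

definition ddgam :: "(real \<Rightarrow> complex) \<Rightarrow> real \<Rightarrow> complex" where
  "ddgam \<gamma> t = vector_derivative (dgam \<gamma>) (at t within {0..1})"

definition Cr_on01 :: "nat \<Rightarrow> (real \<Rightarrow> complex) \<Rightarrow> bool" where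
  "Cr_on01 r \<gamma> \<longleftrightarrow> (\<exists>D :: nat \<Rightarrow> real \<Rightarrow> complex. D 0 = \<gamma> \<and>
     (\<forall>j<r. \<forall>t\<in>{0..1}. (D j has_vector_derivative D (Suc j) t) (at t within {0..1})) \<and>
     continuous_on {0..1} (D r))"

definition regular_Cr_curve :: "nat \<Rightarrow> (real \<Rightarrow> complex) \<Rightarrow> bool" where
  "regular_Cr_curve r \<gamma> \<longleftrightarrow> Cr_on01 r \<gamma> \<and> (\<forall>t\<in>{0..1}. dgam \<gamma> t \<noteq> 0)"

definition unit_tangent :: "(real \<Rightarrow> complex) \<Rightarrow> real \<Rightarrow> complex" where
  "unit_tangent \<gamma> t = dgam \<gamma> t / complex_of_real (cmod (dgam \<gamma> t))"

definition curvature :: "(real \<Rightarrow> complex) \<Rightarrow> real \<Rightarrow> real" where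
  "curvature \<gamma> t = Im (cnj (dgam \<gamma> t) * ddgam \<gamma> t) / (cmod (dgam \<gamma> t)) ^ 3"

(* the continuous argument of the unit tangent on [0,1] with theta(0) = 0
   (normalised to 0 outside [0,1] so that it is unique) *)
definition theta :: "(real \<Rightarrow> complex) \<Rightarrow> real \<Rightarrow> real" where
  "theta \<gamma> = (THE \<theta>. continuous_on {0..1} \<theta> \<and> \<theta> 0 = 0 \<and>
      (\<forall>t\<in>{0..1}. cis (\<theta> t) = unit_tangent \<gamma> t) \<and> (\<forall>t. t \<notin> {0..1} \<longrightarrow> \<theta> t = 0))"

definition in_M :: "nat \<Rightarrow> complex \<Rightarrow> complex \<Rightarrow> real \<Rightarrow> (real \<Rightarrow> complex) \<Rightarrow> bool" where
  "in_M r q z \<theta>1 \<gamma> \<longleftrightarrow> regular_Cr_curve r \<gamma> \<and> \<gamma> 0 = 0 \<and> unit_tangent \<gamma> 0 = 1 \<and>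
     \<gamma> 1 = q \<and> unit_tangent \<gamma> 1 = z \<and> (\<forall>t\<in>{0..1}. \<bar>curvature \<gamma> t\<bar> < 1) \<and>
     theta \<gamma> 1 = \<theta>1"

definition Fst :: "real \<Rightarrow> ereal" where
  "Fst u = (if 1 \<le> u then \<infinity> else if u \<le> -1 then -\<infinity> else ereal (u / sqrt (1 - u\<^sup>2)))"

definition meet_val :: "(real \<Rightarrow> ereal) \<Rightarrow> (real \<Rightarrow> ereal) \<Rightarrow> ereal \<Rightarrow> ereal" where
  "meet_val g h dflt = (if \<exists>x v. g x = ereal v \<and> h x = ereal v
      then ereal (THE v. \<exists>x. g x = ereal v \<and> h x = ereal v) else dflt)"

definition lam_plus :: "real \<Rightarrow> real \<Rightarrow> real \<Rightarrow> real \<Rightarrow> ereal" where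
  "lam_plus \<kappa>0 r0 rb b = meet_val
     (\<lambda>x. Fst (\<kappa>0 * x + r0 / sqrt (1 + r0\<^sup>2)))
     (\<lambda>x. Fst (- \<kappa>0 * (x - b) + rb / sqrt (1 + rb\<^sup>2))) \<infinity>"

definition lam_minus :: "real \<Rightarrow> real \<Rightarrow> real \<Rightarrow> real \<Rightarrow> ereal" where
  "lam_minus \<kappa>0 r0 rb b = meet_val
     (\<lambda>x. Fst (- \<kappa>0 * x + r0 / sqrt (1 + r0\<^sup>2)))
     (\<lambda>x. Fst (\<kappa>0 * (x - b) + rb / sqrt (1 + rb\<^sup>2))) (-\<infinity>)"

(* After translating by -gamma(c) and rotating by -psi, the curve is the graph of y over [0,b],
   b = Re(e^{-i psi}(gamma d - gamma c)), and the slope y' at the point with parameter t equals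
   Im w / Re w with w = e^{-i psi} gamma'(t). *)
definition kstretchable :: "real \<Rightarrow> (real \<Rightarrow> complex) \<Rightarrow> real \<Rightarrow> real \<Rightarrow> real \<Rightarrow> bool" where
  "kstretchable \<kappa>0 \<gamma> \<psi> c d \<longleftrightarrow> c < d \<and> {c..d} \<subseteq> {0..1} \<and>
     (\<forall>t\<in>{c..d}. unit_tangent \<gamma> t \<bullet> cis \<psi> > 0) \<and>
     (\<forall>t\<in>{c..d}. \<bar>curvature \<gamma> t\<bar> \<le> \<kappa>0) \<and>
     (let b = Re (cis (- \<psi>) * (\<gamma> d - \<gamma> c));
          w0 = cis (- \<psi>) * dgam \<gamma> c; wb = cis (- \<psi>) * dgam \<gamma> d;
          r0 = Im w0 / Re w0; rb = Im wb / Re wb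
      in lam_minus \<kappa>0 r0 rb b \<le> 0 \<and> 0 \<le> lam_plus \<kappa>0 r0 rb b)"

definition stretchable :: "(real \<Rightarrow> complex) \<Rightarrow> real \<Rightarrow> real \<Rightarrow> real \<Rightarrow> bool" where
  "stretchable \<gamma> \<psi> c d \<longleftrightarrow> (\<exists>\<kappa>0. 0 < \<kappa>0 \<and> \<kappa>0 < 1 \<and> kstretchable \<kappa>0 \<gamma> \<psi> c d)"

(* sign strings: sigma(k) for k in [l] is the list entry sigma ! (k-1) *)
definition sign_string :: "int list \<Rightarrow> bool" where
  "sign_string s \<longleftrightarrow> 2 \<le> length s \<and> set s \<subseteq> {-1, 1} \<and>
     (\<forall>k. Suc k < length s \<longrightarrow> s ! Suc k = - (s ! k))"

definition neg_sign :: "int list \<Rightarrow> int list" where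
  "neg_sign s = map uminus s"

definition quasicritical ::
  "(real \<Rightarrow> complex) \<Rightarrow> real \<Rightarrow> real \<Rightarrow> int list \<Rightarrow> bool" where
  "quasicritical \<gamma> \<phi> \<epsilon> \<sigma> \<longleftrightarrow> sign_string \<sigma> \<and>
     (\<exists>a b :: nat \<Rightarrow> real.
        (\<forall>k<length \<sigma>. 0 \<le> a k \<and> a k \<le> b k \<and> b k \<le> 1) \<and>
        (\<forall>k. Suc k < length \<sigma> \<longrightarrow> b k < a (Suc k)) \<and>
        (\<forall>k<length \<sigma>. \<forall>t\<in>{a k..b k}.
            (\<sigma> ! k = 1 \<longrightarrow> theta \<gamma> t \<in> {\<phi> - pi/2 + 2*\<epsilon> <..< \<phi> + pi/2 + \<epsilon>}) \<and>
            (\<sigma> ! k = -1 \<longrightarrow> theta \<gamma> t \<in> {\<phi> - pi/2 - \<epsilon> <..< \<phi> + pi/2 - 2*\<epsilon>})) \<and>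
        (\<forall>t\<in>{0..1}. t \<notin> interior (\<Union>k<length \<sigma>. {a k..b k}) \<longrightarrow>
            \<bar>theta \<gamma> t - \<phi>\<bar> < pi/2 - 2*\<epsilon>) \<and>
        (\<forall>k<length \<sigma>. \<exists>c d. a k \<le> c \<and> c \<le> d \<and> d \<le> b k \<and>
            (\<forall>t\<in>{c..d}. \<bar>theta \<gamma> t - (\<phi> + real_of_int (\<sigma> ! k) * (pi/2))\<bar> < \<epsilon>) \<and>
            stretchable \<gamma> (\<phi> + real_of_int (\<sigma> ! k) * (pi/2)) c d))"

end

theory Submission
  imports Defs
begin

(* Suppose gamma is (phi,eps)-quasicritical of type sigma and
   (phi,eps')-quasicritical of type -sigma; by symmetry eps' <= 2 eps.
   - Every quasicritical curve has "peak" times t_1 < ... < t_n at which theta is within eps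
     of phi + sigma(k) pi/2 (taken inside the stretchable subintervals I_k).
   - Conversely, every time at which theta is within 2 eps of phi +- pi/2 lies in one of the
     ordered windows J_j of the (phi,eps)-structure, and the sign of that window is the sign
     of the direction (conditions (i) and (ii) leave no room for anything else).
   Locating the peaks of the second structure in the windows of the first gives a
   non-decreasing map j : [n] -> [n] with sigma(j k) = -sigma(k).  For an alternating string
   such a map is strictly increasing with j 1 > 1, hence j n > n: a contradiction. *)

lemma sign_string_nth_cases:
  assumes "sign_string s" and "k < length s"
  shows "s ! k = 1 \<or> s ! k = -1"
proof -
  have "s ! k \<in> set s" using assms(2) by simp
  then show ?thesis using assms(1) by (auto simp: sign_string_def)
qed

lemma sign_string_no_flipping_map:
  assumes ss: "sign_string s"
    and range: "\<And>k. k < length s \<Longrightarrow> j k < length s"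
    and mono: "\<And>k. Suc k < length s \<Longrightarrow> j k \<le> j (Suc k)"
    and flip: "\<And>k. k < length s \<Longrightarrow> s ! j k = - (s ! k)"
  shows False
proof -
  define n where "n = length s"
  have n2: "2 \<le> n" using ss by (simp add: sign_string_def n_def)
  have nonzero: "s ! i \<noteq> 0" if "i < n" for i
    using sign_string_nth_cases[OF ss] that by (fastforce simp: n_def)
  have step: "j k < j (Suc k)" if sk: "Suc k < n" for k
  proof -
    have "s ! j (Suc k) = s ! k"
      using flip[of "Suc k"] ss sk by (simp add: sign_string_def n_def)
    also have "\<dots> = - (s ! j k)" using flip[of k] sk by (simp add: n_def)
    finally have "j (Suc k) \<noteq> j k" using nonzero[of "j k"] range[of k] sk by (auto simp: n_def)
    then show ?thesis using mono[of k] sk by (simp add: n_def)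
  qed
  have start: "0 < j 0"
  proof (rule ccontr)
    assume "\<not> 0 < j 0"
    then have "j 0 = 0" by simp
    moreover have "0 < length s" using n2 unfolding n_def by linarith
    ultimately have "s ! 0 = - (s ! 0)" using flip[of 0] by simp
    then show False using nonzero[of 0] \<open>0 < length s\<close> by (simp add: n_def)
  qed
  have "k < j k" if "k < n" for k
    using that
  proof (induction k)
    case 0 then show ?case using start by simp
  next
    case (Suc k) then show ?case using step[of k] by simp
  qed
  then have "n - 1 < j (n - 1)" using n2 by simp
  moreover have "j (n - 1) < n" using range[of "n - 1"] n2 by (simp add: n_def)
  ultimately show False by simp
qed

definition ordered_windows :: "nat \<Rightarrow> (nat \<Rightarrow> real) \<Rightarrow> (nat \<Rightarrow> real) \<Rightarrow> bool" where
  "ordered_windows n a b \<longleftrightarrow> (\<forall>k<n. a k \<le> b k) \<and> (\<forall>k. Suc k < n \<longrightarrow> b k < a (Suc k))"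

lemma ordered_windows_separated:
  assumes "ordered_windows n a b" and "i < l" and "l < n"
  shows "b i < a l"
  using assms(2,3)
proof (induction l)
  case 0 then show ?case by simp
next
  case (Suc l)
  have gap: "b l < a (Suc l)" and inner: "a l \<le> b l"
    using assms(1) Suc.prems by (simp_all add: ordered_windows_def)
  show ?case
  proof (cases "i = l")
    case True then show ?thesis using gap by simp
  next
    case False
    then have "b i < a l" using Suc by simp
    then show ?thesis using gap inner by linarith
  qed
qed

lemma ordered_windows_index_mono:
  assumes "ordered_windows n a b" and "i < n" and "l < n"
    and "s \<in> {a i..b i}" and "t \<in> {a l..b l}" and "s \<le> t"
  shows "i \<le> l"
proof (rule ccontr)
  assume "\<not> i \<le> l"
  then have "b l < a i" using ordered_windows_separated[OF assms(1)] assms(2) by simp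
  then show False using assms(4-6) by simp
qed

(* Condition (iii): each I_k supplies a time at which theta is within eps of the critical
   direction phi + sigma(k) pi/2; these times increase with k because the J_k are ordered. *)
lemma quasicritical_peak_times:
  assumes "quasicritical \<gamma> \<phi> \<epsilon> \<sigma>"
  obtains t where "\<And>k. k < length \<sigma> \<Longrightarrow> t k \<in> {0..1}"
    and "\<And>k. k < length \<sigma> \<Longrightarrow> \<bar>theta \<gamma> (t k) - (\<phi> + real_of_int (\<sigma> ! k) * (pi/2))\<bar> < \<epsilon>"
    and "\<And>k. Suc k < length \<sigma> \<Longrightarrow> t k < t (Suc k)"
proof -
  obtain a b where
    ab: "\<forall>k<length \<sigma>. 0 \<le> a k \<and> a k \<le> b k \<and> b k \<le> 1"
      "\<forall>k. Suc k < length \<sigma> \<longrightarrow> b k < a (Suc k)" and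
    peaks: "\<forall>k<length \<sigma>. \<exists>c d. a k \<le> c \<and> c \<le> d \<and> d \<le> b k \<and>
       (\<forall>t\<in>{c..d}. \<bar>theta \<gamma> t - (\<phi> + real_of_int (\<sigma> ! k) * (pi/2))\<bar> < \<epsilon>) \<and>
       stretchable \<gamma> (\<phi> + real_of_int (\<sigma> ! k) * (pi/2)) c d"
    using assms unfolding quasicritical_def by blast
  have "\<forall>k<length \<sigma>. \<exists>c. a k \<le> c \<and> c \<le> b k \<and>
          \<bar>theta \<gamma> c - (\<phi> + real_of_int (\<sigma> ! k) * (pi/2))\<bar> < \<epsilon>"
    using peaks by (metis atLeastAtMost_iff order.refl order.trans)
  then obtain t where t: "\<And>k. k < length \<sigma> \<Longrightarrow> a k \<le> t k \<and> t k \<le> b k \<and>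
          \<bar>theta \<gamma> (t k) - (\<phi> + real_of_int (\<sigma> ! k) * (pi/2))\<bar> < \<epsilon>"
    by metis
  show thesis
  proof (rule that)
    show "t k \<in> {0..1}" if "k < length \<sigma>" for k using t[OF that] ab(1) that by force
    show "\<bar>theta \<gamma> (t k) - (\<phi> + real_of_int (\<sigma> ! k) * (pi/2))\<bar> < \<epsilon>"
      if "k < length \<sigma>" for k using t[OF that] by blast
    show "t k < t (Suc k)" if "Suc k < length \<sigma>" for k
      using t[of k] t[of "Suc k"] ab(2) that by force
  qed
qed

lemma quasicritical_locate:
  assumes "quasicritical \<gamma> \<phi> \<epsilon> \<sigma>"
  obtains a b where "ordered_windows (length \<sigma>) a b"
    and "\<And>t s. t \<in> {0..1} \<Longrightarrow> s \<in> {-1, 1} \<Longrightarrow>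
           \<bar>theta \<gamma> t - (\<phi> + real_of_int s * (pi/2))\<bar> < 2 * \<epsilon> \<Longrightarrow>
           \<exists>j<length \<sigma>. t \<in> {a j..b j} \<and> \<sigma> ! j = s"
proof -
  define n where "n = length \<sigma>"
  obtain a b where
    ab: "\<forall>k<n. 0 \<le> a k \<and> a k \<le> b k \<and> b k \<le> 1"
      "\<forall>k. Suc k < n \<longrightarrow> b k < a (Suc k)" and
    signs: "\<forall>k<n. \<forall>t\<in>{a k..b k}.
       (\<sigma> ! k = 1 \<longrightarrow> theta \<gamma> t \<in> {\<phi> - pi/2 + 2*\<epsilon> <..< \<phi> + pi/2 + \<epsilon>}) \<and>
       (\<sigma> ! k = -1 \<longrightarrow> theta \<gamma> t \<in> {\<phi> - pi/2 - \<epsilon> <..< \<phi> + pi/2 - 2*\<epsilon>})" and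
    outside: "\<forall>t\<in>{0..1}. t \<notin> interior (\<Union>k<n. {a k..b k}) \<longrightarrow>
       \<bar>theta \<gamma> t - \<phi>\<bar> < pi/2 - 2*\<epsilon>"
    using assms unfolding quasicritical_def n_def by blast
  have pm: "\<sigma> ! k = 1 \<or> \<sigma> ! k = -1" if "k < n" for k
    using assms that sign_string_nth_cases by (auto simp: quasicritical_def n_def)
  show thesis
  proof (rule that)
    show "ordered_windows (length \<sigma>) a b" using ab by (simp add: ordered_windows_def n_def)
  next
    fix t and s :: int
    assume t01: "t \<in> {0..1}" and s: "s \<in> {-1, 1}"
      and near: "\<bar>theta \<gamma> t - (\<phi> + real_of_int s * (pi/2))\<bar> < 2 * \<epsilon>"
    have "t \<in> (\<Union>k<n. {a k..b k})"
    proof (rule ccontr)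
      assume "t \<notin> (\<Union>k<n. {a k..b k})"
      then have "\<bar>theta \<gamma> t - \<phi>\<bar> < pi/2 - 2*\<epsilon>"
        using outside t01 interior_subset by blast
      then show False using near s by auto
    qed
    then obtain j where j: "j < n" "t \<in> {a j..b j}" by blast
    have window_sign:
      "(\<sigma> ! j = 1 \<longrightarrow> \<phi> - pi/2 + 2*\<epsilon> < theta \<gamma> t) \<and>
       (\<sigma> ! j = -1 \<longrightarrow> theta \<gamma> t < \<phi> + pi/2 - 2*\<epsilon>)"
      using signs j by auto
    have "\<sigma> ! j = s"
      using pm[OF j(1)] window_sign near s by auto
    then show "\<exists>j<length \<sigma>. t \<in> {a j..b j} \<and> \<sigma> ! j = s" using j by (auto simp: n_def)
  qed
qed

lemma quasicritical_not_opposite: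
  assumes qc: "quasicritical \<gamma> \<phi> \<epsilon> \<sigma>" and qc': "quasicritical \<gamma> \<phi> \<epsilon>' \<sigma>'"
    and finer: "\<epsilon>' \<le> 2 * \<epsilon>"
  shows "\<sigma>' \<noteq> neg_sign \<sigma>"
proof
  assume opp: "\<sigma>' = neg_sign \<sigma>"
  have len: "length \<sigma>' = length \<sigma>" and opp_nth: "\<And>k. k < length \<sigma> \<Longrightarrow> \<sigma>' ! k = - (\<sigma> ! k)"
    using opp by (simp_all add: neg_sign_def)
  obtain a b where windows: "ordered_windows (length \<sigma>) a b"
    and locate: "\<And>t s. t \<in> {0..1} \<Longrightarrow> s \<in> {-1, 1} \<Longrightarrow>
           \<bar>theta \<gamma> t - (\<phi> + real_of_int s * (pi/2))\<bar> < 2 * \<epsilon> \<Longrightarrow>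
           \<exists>j<length \<sigma>. t \<in> {a j..b j} \<and> \<sigma> ! j = s"
    using quasicritical_locate[OF qc] by blast
  obtain t where t01: "\<And>k. k < length \<sigma> \<Longrightarrow> t k \<in> {0..1}"
    and peak: "\<And>k. k < length \<sigma> \<Longrightarrow>
           \<bar>theta \<gamma> (t k) - (\<phi> + real_of_int (\<sigma>' ! k) * (pi/2))\<bar> < \<epsilon>'"
    and incr: "\<And>k. Suc k < length \<sigma> \<Longrightarrow> t k < t (Suc k)"
    using quasicritical_peak_times[OF qc'] unfolding len by blast
  have "\<exists>j<length \<sigma>. t k \<in> {a j..b j} \<and> \<sigma> ! j = \<sigma>' ! k" if k: "k < length \<sigma>" for k
  proof (rule locate)
    show "t k \<in> {0..1}" using t01[OF k] .
    have "sign_string \<sigma>'" using qc' by (simp add: quasicritical_def)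
    then show "\<sigma>' ! k \<in> {-1, 1}" using sign_string_nth_cases[of \<sigma>' k] k len by auto
    show "\<bar>theta \<gamma> (t k) - (\<phi> + real_of_int (\<sigma>' ! k) * (pi/2))\<bar> < 2 * \<epsilon>"
      using peak[OF k] finer by linarith
  qed
  then obtain j where j: "\<And>k. k < length \<sigma> \<Longrightarrow>
      j k < length \<sigma> \<and> t k \<in> {a (j k)..b (j k)} \<and> \<sigma> ! j k = \<sigma>' ! k"
    by metis
  show False
  proof (rule sign_string_no_flipping_map)
    show "sign_string \<sigma>" using qc by (simp add: quasicritical_def)
    show "j k < length \<sigma>" if "k < length \<sigma>" for k using j[OF that] by blast
    show "\<sigma> ! j k = - (\<sigma> ! k)" if "k < length \<sigma>" for k using j[OF that] opp_nth[OF that] by simp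
    show "j k \<le> j (Suc k)" if sk: "Suc k < length \<sigma>" for k
    proof (rule ordered_windows_index_mono[OF windows])
      show "j k < length \<sigma>" "t k \<in> {a (j k)..b (j k)}" using j[of k] sk by auto
      show "j (Suc k) < length \<sigma>" "t (Suc k) \<in> {a (j (Suc k))..b (j (Suc k))}"
        using j[OF sk] by auto
      show "t k \<le> t (Suc k)" using incr[OF sk] by simp
    qed
  qed
qed

theorem lemma4p6:
  fixes \<gamma> :: "real \<Rightarrow> complex" and q z :: complex and \<theta>1 \<phi> \<epsilon> \<epsilon>' :: real
    and r :: nat and \<sigma> \<sigma>' :: "int list"
  assumes "cmod z = 1" and "z \<noteq> -1" and "-pi < \<theta>1" and "\<theta>1 < pi" and "cis \<theta>1 = z"
    and "2 \<le> r"
    and "in_M r q z \<theta>1 \<gamma>"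
    and "0 < \<epsilon>" and "\<epsilon> < pi/4" and "0 < \<epsilon>'" and "\<epsilon>' < pi/4"
    and "sign_string \<sigma>" and "sign_string \<sigma>'"
    and "quasicritical \<gamma> \<phi> \<epsilon> \<sigma>"
    and "quasicritical \<gamma> \<phi> \<epsilon>' \<sigma>'"
  shows "\<sigma>' \<noteq> neg_sign \<sigma>"
proof (cases "\<epsilon>' \<le> \<epsilon>")
  case True
  then show ?thesis using quasicritical_not_opposite[OF assms(14,15)] assms(8) by simp
next
  case False
  then have "\<sigma> \<noteq> neg_sign \<sigma>'" using quasicritical_not_opposite[OF assms(15,14)] assms(10) by simp
  then show ?thesis by (auto simp: neg_sign_def)
qed

end
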